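(* Let $f:X\to Y$ be a continuous surjection between compact Hausdorff spaces. Then the map $OH(f):OH(X)\to OH(Y)$ is open if and only if $f$ is open.
   Context: All spaces are compact Hausdorff and all maps continuous. For a compactum $X$, $C(X)$ is the Banach space of continuous real functions on $X$ with the sup-norm, and $c_X$ denotes the constant function with value $c\in\mathbb{R}$. Let $V(X)=\prod_{\varphi\in C(X)}[\min\varphi,\max\varphi]$ with the product topology (elements are functionals $\nu:C(X)\to\mathbb{R}$). A functional $\nu:C(X)\to\mathbb{R}$ is: normed if $\nu(1_X)=1$; weakly additive if $\nu(\varphi+c_X)=\nu(\varphi)+c$ for all $\varphi\in C(X)$, $c\in\mathbb{R}$; order-preserving if $\varphi\le\psi$ implies $\nu(\varphi)\le\nu(\psi)$; positively homogeneous if $\nu(t\varphi)=t\nu(\varphi)$ for all $t\ge 0$. $OH(X)\subset V(X)$ is the subspace of all functionals that are normed, weakly additive, order-preserving and positively homogeneous. For a map $f:X\to Y$, $OH(f):OH(X)\to OH(Y)$ is given by $OH(f)(\nu)(\varphi)=\nu(\varphi\circ f)$ for $\varphi\in C(Y)$. *)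

theory Defs
  imports "HOL-Analysis.Analysis"
begin

text \<open>Functions on the compactum X are represented as real functions on the carrier type that
vanish outside topspace X, so that each element of C(X) has a unique representative.\<close>

definition extX :: "'a topology \<Rightarrow> ('a \<Rightarrow> real) \<Rightarrow> ('a \<Rightarrow> real)" where
  "extX X g = (\<lambda>x. if x \<in> topspace X then g x else 0)"

definition CX :: "'a topology \<Rightarrow> ('a \<Rightarrow> real) set" where
  "CX X = {\<phi>. continuous_map X euclideanreal \<phi> \<and> (\<forall>x. x \<notin> topspace X \<longrightarrow> \<phi> x = 0)}"

definition VX :: "'a topology \<Rightarrow> (('a \<Rightarrow> real) \<Rightarrow> real) set" where
  "VX X = (\<Pi>\<^sub>E \<phi>\<in>CX X. {Inf (\<phi> ` topspace X) .. Sup (\<phi> ` topspace X)})"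

definition OH :: "'a topology \<Rightarrow> (('a \<Rightarrow> real) \<Rightarrow> real) set" where
  "OH X = {\<nu> \<in> VX X.
      \<nu> (extX X (\<lambda>_. 1)) = 1
    \<and> (\<forall>\<phi>\<in>CX X. \<forall>c::real. \<nu> (extX X (\<lambda>x. \<phi> x + c)) = \<nu> \<phi> + c)
    \<and> (\<forall>\<phi>\<in>CX X. \<forall>\<psi>\<in>CX X. (\<forall>x\<in>topspace X. \<phi> x \<le> \<psi> x) \<longrightarrow> \<nu> \<phi> \<le> \<nu> \<psi>)
    \<and> (\<forall>\<phi>\<in>CX X. \<forall>t::real. t \<ge> 0 \<longrightarrow> \<nu> (\<lambda>x. t * \<phi> x) = t * \<nu> \<phi>)}"

definition OHtop :: "'a topology \<Rightarrow> (('a \<Rightarrow> real) \<Rightarrow> real) topology" where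
  "OHtop X = subtopology (product_topology (\<lambda>_. euclideanreal) (CX X)) (OH X)"

definition OHmap :: "'a topology \<Rightarrow> 'b topology \<Rightarrow> ('a \<Rightarrow> 'b)
    \<Rightarrow> (('a \<Rightarrow> real) \<Rightarrow> real) \<Rightarrow> (('b \<Rightarrow> real) \<Rightarrow> real)" where
  "OHmap X Y f \<nu> = (\<lambda>\<phi>\<in>CX Y. \<nu> (extX X (\<lambda>x. \<phi> (f x))))"

end

theory Submission
  imports Defs
begin

(* (\<Leftarrow>) If f is open, then for every continuous \<phi> on X the fibrewise maximum
   \<phi>^+(y) = max \<phi>|f^-1(y) and fibrewise minimum \<phi>^-(y) = min \<phi>|f^-1(y) are continuous on Y
   (upper semicontinuity comes from compactness, lower from openness of f).
   For a fixed \<nu>0 \<in> OH(X) the map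
       \<mu> \<mapsto> (\<phi> \<mapsto> max (min (\<nu>0 \<phi>) (\<mu> \<phi>^+)) (\<mu> \<phi>^-))
   sends OH(Y) continuously into OH(X), is a right inverse of OH(f) and sends
   OH(f)(\<nu>0) back to \<nu>0.  A map that admits a continuous section through
   every point of its domain is open.

   (\<Rightarrow>) If OH(f) is open, take x \<in> U open and a Urysohn function \<phi> with
   \<phi>(x) = 1 and \<phi> = 0 off U.  The set of \<delta>_y lying in OH(f){\<nu>. \<nu> \<phi> > 1/2}
   is an open neighbourhood of f(x) (y \<mapsto> \<delta>_y is continuous); it lies in f(U),
   because a functional \<nu> with OH(f)(\<nu>) = \<delta>_y is concentrated near the fibre
   f^-1(y), so \<nu> \<phi> \<le> 1/4 when that fibre misses U. *)

lemma extX_cong: "(\<And>x. x \<in> topspace X \<Longrightarrow> g x = h x) \<Longrightarrow> extX X g = extX X h"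
  by (auto simp: extX_def)

lemma extX_in: "x \<in> topspace X \<Longrightarrow> extX X g x = g x"
  by (simp add: extX_def)

lemma CX_extX: "continuous_map X euclideanreal g \<Longrightarrow> extX X g \<in> CX X"
  unfolding CX_def extX_def
  by (auto intro: continuous_map_eq)

lemma CX_cont: "\<phi> \<in> CX X \<Longrightarrow> continuous_map X euclideanreal \<phi>"
  by (simp add: CX_def)

lemma CX_out: "\<phi> \<in> CX X \<Longrightarrow> x \<notin> topspace X \<Longrightarrow> \<phi> x = 0"
  by (simp add: CX_def)

lemma CX_minus: "\<phi> \<in> CX X \<Longrightarrow> (\<lambda>x. - \<phi> x) \<in> CX X"
  by (auto simp: CX_def intro: continuous_intros)

lemma CX_mult: "\<phi> \<in> CX X \<Longrightarrow> (\<lambda>x. t * \<phi> x) \<in> CX X"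
  by (auto simp: CX_def intro: continuous_intros)

lemma CX_zero: "(\<lambda>_. 0) \<in> CX X"
  by (auto simp: CX_def)

lemma CX_shift: "\<phi> \<in> CX X \<Longrightarrow> extX X (\<lambda>x. \<phi> x + c) \<in> CX X"
  by (rule CX_extX) (auto simp: CX_def intro!: continuous_intros)

lemma compact_image_real:
  assumes "compact_space X" "continuous_map X euclideanreal \<phi>" "closedin X S"
  shows "compact (\<phi> ` S)"
proof -
  have "compactin X S" using assms closedin_compact_space by blast
  then have "compactin euclideanreal (\<phi> ` S)" using assms image_compactin by blast
  then show ?thesis by simp
qed

lemma Urysohn_CX:
  assumes "normal_space X" "closedin X S" "closedin X T" "disjnt S T"
  obtains \<phi> where "\<phi> \<in> CX X" "\<And>x. x \<in> topspace X \<Longrightarrow> 0 \<le> \<phi> x \<and> \<phi> x \<le> 1"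
    "\<And>x. x \<in> S \<Longrightarrow> \<phi> x = 0" "\<And>x. x \<in> T \<Longrightarrow> \<phi> x = 1"
proof -
  obtain \<phi> where \<phi>: "continuous_map X (top_of_set {0..1::real}) \<phi>"
      "\<phi> ` S \<subseteq> {0}" "\<phi> ` T \<subseteq> {1}"
    by (rule Urysohn_lemma[OF assms, of 0 1]) auto
  have "continuous_map X euclideanreal \<phi>" "\<And>x. x \<in> topspace X \<Longrightarrow> 0 \<le> \<phi> x \<and> \<phi> x \<le> 1"
    using \<phi>(1) by (auto simp: continuous_map_in_subtopology Pi_iff)
  moreover have "S \<subseteq> topspace X" "T \<subseteq> topspace X"
    using assms(2,3) closedin_subset by blast+
  ultimately show ?thesis
    using \<phi>(2,3) by (intro that[of "extX X \<phi>"]) (auto simp: CX_extX extX_in subset_iff)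
qed

section \<open>The space OH(X)\<close>

lemma OH_props:
  assumes "\<nu> \<in> OH X"
  shows "\<nu> (extX X (\<lambda>_. 1)) = 1"
    "\<And>\<phi> c. \<phi> \<in> CX X \<Longrightarrow> \<nu> (extX X (\<lambda>x. \<phi> x + c)) = \<nu> \<phi> + c"
    "\<And>\<phi> \<psi>. \<phi> \<in> CX X \<Longrightarrow> \<psi> \<in> CX X \<Longrightarrow> (\<forall>x\<in>topspace X. \<phi> x \<le> \<psi> x) \<Longrightarrow> \<nu> \<phi> \<le> \<nu> \<psi>"
    "\<And>\<phi> t. \<phi> \<in> CX X \<Longrightarrow> t \<ge> 0 \<Longrightarrow> \<nu> (\<lambda>x. t * \<phi> x) = t * \<nu> \<phi>"
    "\<nu> \<in> extensional (CX X)"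
  using assms unfolding OH_def VX_def by (auto simp: PiE_def)

text \<open>On a compactum the range condition defining V(X) is automatic: by monotonicity,
  weak additivity and normalisation, \<nu> \<phi> lies between \<nu>(min \<phi>) = min \<phi> and max \<phi>.\<close>
lemma OH_intro:
  assumes cX: "compact_space X"
    and ext: "\<nu> \<in> extensional (CX X)"
    and n: "\<nu> (extX X (\<lambda>_. 1)) = 1"
    and a: "\<And>\<phi> c. \<phi> \<in> CX X \<Longrightarrow> \<nu> (extX X (\<lambda>x. \<phi> x + c)) = \<nu> \<phi> + c"
    and m: "\<And>\<phi> \<psi>. \<phi> \<in> CX X \<Longrightarrow> \<psi> \<in> CX X \<Longrightarrow> (\<forall>x\<in>topspace X. \<phi> x \<le> \<psi> x) \<Longrightarrow> \<nu> \<phi> \<le> \<nu> \<psi>"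
    and h: "\<And>\<phi> t. \<phi> \<in> CX X \<Longrightarrow> t \<ge> 0 \<Longrightarrow> \<nu> (\<lambda>x. t * \<phi> x) = t * \<nu> \<phi>"
  shows "\<nu> \<in> OH X"
proof -
  have "\<nu> (\<lambda>x. 0 * 0) = 0 * \<nu> (\<lambda>_. 0)" using h[OF CX_zero, of 0] by simp
  then have z: "\<nu> (\<lambda>_. 0) = 0" by simp
  have cst: "\<nu> (extX X (\<lambda>_. c)) = c" for c
    using a[OF CX_zero, of c] z by simp
  have range: "\<nu> \<phi> \<in> {Inf (\<phi> ` topspace X) .. Sup (\<phi> ` topspace X)}" if \<phi>: "\<phi> \<in> CX X" for \<phi>
  proof -
    have "compact (\<phi> ` topspace X)"
      using compact_image_real[OF cX CX_cont[OF \<phi>]] by simp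
    then have b: "bounded (\<phi> ` topspace X)" by (rule compact_imp_bounded)
    have c1: "extX X (\<lambda>_. Inf (\<phi> ` topspace X)) \<in> CX X" "extX X (\<lambda>_. Sup (\<phi> ` topspace X)) \<in> CX X"
      by (auto intro!: CX_extX)
    have "\<nu> (extX X (\<lambda>_. Inf (\<phi> ` topspace X))) \<le> \<nu> \<phi>"
      using b by (intro m[OF c1(1) \<phi>]) (auto simp: extX_def intro!: cInf_lower bounded_imp_bdd_below)
    moreover have "\<nu> \<phi> \<le> \<nu> (extX X (\<lambda>_. Sup (\<phi> ` topspace X)))"
      using b by (intro m[OF \<phi> c1(2)]) (auto simp: extX_def intro!: cSup_upper bounded_imp_bdd_above)
    ultimately show ?thesis by (simp add: cst)
  qed
  have "\<nu> \<in> VX X" unfolding VX_def using ext range by (auto simp: PiE_def)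
  then show ?thesis unfolding OH_def using n a m h by auto
qed

text \<open>Elements of OH(X) are extensional, so OH(X) lies inside the product space.\<close>
lemma topspace_OHtop [simp]: "topspace (OHtop X) = OH X"
proof -
  have "OH X \<subseteq> (\<Pi>\<^sub>E \<phi>\<in>CX X. UNIV)"
    unfolding OH_def VX_def by (auto simp: PiE_def)
  then show ?thesis unfolding OHtop_def by auto
qed

lemma OH_eval_cont: "\<psi> \<in> CX X \<Longrightarrow> continuous_map (OHtop X) euclideanreal (\<lambda>\<nu>. \<nu> \<psi>)"
  unfolding OHtop_def
  by (intro continuous_map_from_subtopology) (rule continuous_map_product_projection)

lemma continuous_map_into_OHtop:
  assumes into: "\<And>z. z \<in> topspace Z \<Longrightarrow> h z \<in> OH X"
    and coord: "\<And>\<phi>. \<phi> \<in> CX X \<Longrightarrow> continuous_map Z euclideanreal (\<lambda>z. h z \<phi>)"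
  shows "continuous_map Z (OHtop X) h"
proof -
  have "h ` topspace Z \<subseteq> extensional (CX X)"
    using into OH_props(5) by blast
  then have "continuous_map Z (product_topology (\<lambda>_. euclideanreal) (CX X)) h"
    using coord by (simp add: continuous_map_componentwise)
  then show ?thesis
    using into unfolding OHtop_def by (simp add: continuous_map_in_subtopology image_subset_iff)
qed

definition dirac :: "'a topology \<Rightarrow> 'a \<Rightarrow> (('a \<Rightarrow> real) \<Rightarrow> real)" where
  "dirac X x = (\<lambda>\<phi>\<in>CX X. \<phi> x)"

lemma dirac_OH:
  assumes "compact_space X" "x \<in> topspace X"
  shows "dirac X x \<in> OH X"
proof -
  have "extX X (\<lambda>_. 1) \<in> CX X" by (rule CX_extX) simp
  then show ?thesis
    using assms CX_shift by (intro OH_intro) (auto simp: dirac_def extX_in CX_mult)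
qed

lemma dirac_cont:
  assumes "compact_space X"
  shows "continuous_map X (OHtop X) (dirac X)"
  using dirac_OH[OF assms]
  by (intro continuous_map_into_OHtop) (auto simp: dirac_def CX_cont)

text \<open>If through every point a of the domain there is a continuous section s of g with
  s(g a) = a, then g is open: s^-1(W) is an open neighbourhood of g a inside g(W).\<close>
lemma open_map_by_sections:
  assumes into: "g ` topspace A \<subseteq> topspace B"
    and sections: "\<And>a. a \<in> topspace A \<Longrightarrow>
      \<exists>s. continuous_map B A s \<and> s (g a) = a \<and> (\<forall>b\<in>topspace B. g (s b) = b)"
  shows "open_map A B g"
  unfolding open_map_def
proof (intro allI impI)
  fix W assume W: "openin A W"
  show "openin B (g ` W)"
    unfolding openin_subopen[of B "g ` W"]
  proof
    fix b0 assume "b0 \<in> g ` W"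
    then obtain a where a: "a \<in> W" "b0 = g a" by auto
    have aA: "a \<in> topspace A" using W a openin_subset by blast
    then obtain s where s: "continuous_map B A s" "s (g a) = a" "\<forall>b\<in>topspace B. g (s b) = b"
      using sections by blast
    define T where "T = {b \<in> topspace B. s b \<in> W}"
    have "openin B T" unfolding T_def by (rule openin_continuous_map_preimage[OF s(1) W])
    moreover have "b0 \<in> T" using a aA into s(2) by (auto simp: T_def)
    moreover have "T \<subseteq> g ` W" using s(3) by (force simp: T_def)
    ultimately show "\<exists>T. openin B T \<and> b0 \<in> T \<and> T \<subseteq> g ` W" by blast
  qed
qed

section \<open>Fibrewise extrema\<close>

definition fibre_max :: "'a topology \<Rightarrow> 'b topology \<Rightarrow> ('a \<Rightarrow> 'b) \<Rightarrow> ('a \<Rightarrow> real) \<Rightarrow> 'b \<Rightarrow> real" where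
  "fibre_max X Y f \<phi> y = (if y \<in> topspace Y then Sup (\<phi> ` {x \<in> topspace X. f x = y}) else 0)"

definition fibre_min :: "'a topology \<Rightarrow> 'b topology \<Rightarrow> ('a \<Rightarrow> 'b) \<Rightarrow> ('a \<Rightarrow> real) \<Rightarrow> 'b \<Rightarrow> real" where
  "fibre_min X Y f \<phi> = (\<lambda>y. - fibre_max X Y f (\<lambda>x. - \<phi> x) y)"

definition OHlift :: "'a topology \<Rightarrow> 'b topology \<Rightarrow> ('a \<Rightarrow> 'b) \<Rightarrow> (('a \<Rightarrow> real) \<Rightarrow> real)
    \<Rightarrow> (('b \<Rightarrow> real) \<Rightarrow> real) \<Rightarrow> (('a \<Rightarrow> real) \<Rightarrow> real)" where
  "OHlift X Y f \<nu>0 \<mu> = (\<lambda>\<phi>\<in>CX X.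
     max (min (\<nu>0 \<phi>) (\<mu> (fibre_max X Y f \<phi>))) (\<mu> (fibre_min X Y f \<phi>)))"

lemma fibre_max_eqI:
  assumes "y \<in> topspace Y" "x0 \<in> topspace X" "f x0 = y" "\<phi> x0 = v"
    "\<And>x. x \<in> topspace X \<Longrightarrow> f x = y \<Longrightarrow> \<phi> x \<le> v"
  shows "fibre_max X Y f \<phi> y = v"
  unfolding fibre_max_def using assms by (auto intro!: cSup_eq_maximum)

context
  fixes X :: "'a topology" and Y :: "'b topology" and f :: "'a \<Rightarrow> 'b"
  assumes cX: "compact_space X" and hY: "Hausdorff_space Y"
    and cf: "continuous_map X Y f" and sf: "f ` topspace X = topspace Y"
begin

lemma f_topspace: "x \<in> topspace X \<Longrightarrow> f x \<in> topspace Y"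
  using sf by blast

text \<open>Fibres are closed, hence compact, and nonempty, so the maximum is attained.\<close>
lemma fibre_max_attain:
  assumes \<phi>: "continuous_map X euclideanreal \<phi>" and y: "y \<in> topspace Y"
  shows "\<exists>x0\<in>topspace X. f x0 = y \<and> \<phi> x0 = fibre_max X Y f \<phi> y"
    "\<And>x. x \<in> topspace X \<Longrightarrow> f x = y \<Longrightarrow> \<phi> x \<le> fibre_max X Y f \<phi> y"
proof -
  let ?F = "{x \<in> topspace X. f x = y}"
  have "closedin Y {y}" using hY y by (simp add: Hausdorff_imp_t1_space closedin_t1_singleton)
  then have "closedin X {x \<in> topspace X. f x \<in> {y}}" by (rule closedin_continuous_map_preimage[OF cf])
  then have "compact (\<phi> ` ?F)" using compact_image_real[OF cX \<phi>] by simp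
  moreover have "\<phi> ` ?F \<noteq> {}" using sf y by force
  ultimately obtain s where s: "s \<in> \<phi> ` ?F" "\<forall>t\<in>\<phi> ` ?F. t \<le> s"
    using compact_attains_sup by blast
  then obtain x0 where x0: "x0 \<in> ?F" "\<phi> x0 = s" by auto
  have eq: "fibre_max X Y f \<phi> y = s"
    using s x0 y by (intro fibre_max_eqI[of _ _ x0]) auto
  show "\<exists>x0\<in>topspace X. f x0 = y \<and> \<phi> x0 = fibre_max X Y f \<phi> y" using x0 eq by auto
  show "\<And>x. x \<in> topspace X \<Longrightarrow> f x = y \<Longrightarrow> \<phi> x \<le> fibre_max X Y f \<phi> y"
    using s eq by auto
qed

lemma fibre_max_ge:
  "continuous_map X euclideanreal \<phi> \<Longrightarrow> x \<in> topspace X \<Longrightarrow> \<phi> x \<le> fibre_max X Y f \<phi> (f x)"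
  using fibre_max_attain(2) f_topspace by blast

lemma fibre_min_le:
  "continuous_map X euclideanreal \<phi> \<Longrightarrow> x \<in> topspace X \<Longrightarrow> fibre_min X Y f \<phi> (f x) \<le> \<phi> x"
  unfolding fibre_min_def using fibre_max_ge[of "\<lambda>x. - \<phi> x" x] by (auto intro: continuous_intros)

lemma fibre_max_superlevel:
  assumes \<phi>: "continuous_map X euclideanreal \<phi>" and up: "\<And>u v. P u \<Longrightarrow> u \<le> v \<Longrightarrow> P v"
  shows "{y \<in> topspace Y. P (fibre_max X Y f \<phi> y)} = f ` {x \<in> topspace X. P (\<phi> x)}"
proof (intro equalityI subsetI)
  fix y assume "y \<in> {y \<in> topspace Y. P (fibre_max X Y f \<phi> y)}"
  then show "y \<in> f ` {x \<in> topspace X. P (\<phi> x)}"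
    using fibre_max_attain(1)[OF \<phi>, of y] by force
next
  fix y assume "y \<in> f ` {x \<in> topspace X. P (\<phi> x)}"
  then show "y \<in> {y \<in> topspace Y. P (fibre_max X Y f \<phi> y)}"
    using fibre_max_ge[OF \<phi>] f_topspace up by blast
qed

text \<open>For open f the fibrewise maximum is continuous: {y. a \<le> max} is the image of a
  compact set, hence closed, and {y. a < max} is the image of an open set.\<close>
lemma fibre_max_CX:
  assumes om: "open_map X Y f" and \<phi>: "continuous_map X euclideanreal \<phi>"
  shows "fibre_max X Y f \<phi> \<in> CX Y"
proof -
  let ?g = "fibre_max X Y f \<phi>"
  have gt: "openin Y {y \<in> topspace Y. ?g y > a}" for a
  proof -
    have "openin X {x \<in> topspace X. \<phi> x > a}"
      using \<phi> continuous_map_upper_lower_semicontinuous_lt by blast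
    then show ?thesis
      using om fibre_max_superlevel[OF \<phi>, of "\<lambda>u. a < u"] unfolding open_map_def by auto
  qed
  have lt: "openin Y {y \<in> topspace Y. ?g y < a}" for a
  proof -
    have "closedin X {x \<in> topspace X. \<phi> x \<ge> a}"
      using \<phi> continuous_map_upper_lower_semicontinuous_le by blast
    then have "compactin Y (f ` {x \<in> topspace X. \<phi> x \<ge> a})"
      using cX cf closedin_compact_space image_compactin by blast
    then have "closedin Y {y \<in> topspace Y. ?g y \<ge> a}"
      using hY compactin_imp_closedin fibre_max_superlevel[OF \<phi>, of "\<lambda>u. a \<le> u"] by auto
    then have "openin Y (topspace Y - {y \<in> topspace Y. ?g y \<ge> a})" by blast
    moreover have "topspace Y - {y \<in> topspace Y. ?g y \<ge> a} = {y \<in> topspace Y. ?g y < a}" by auto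
    ultimately show ?thesis by simp
  qed
  have "continuous_map Y euclideanreal ?g"
    using gt lt continuous_map_upper_lower_semicontinuous_lt by blast
  then show ?thesis unfolding CX_def by (auto simp: fibre_max_def)
qed

lemma fibre_min_CX: "open_map X Y f \<Longrightarrow> \<phi> \<in> CX X \<Longrightarrow> fibre_min X Y f \<phi> \<in> CX Y"
  unfolding fibre_min_def using fibre_max_CX[OF _ CX_cont[OF CX_minus]] CX_minus by blast

lemma fibre_max_mono:
  assumes "continuous_map X euclideanreal \<phi>" "continuous_map X euclideanreal \<phi>'"
    "\<forall>x\<in>topspace X. \<phi> x \<le> \<phi>' x" "y \<in> topspace Y"
  shows "fibre_max X Y f \<phi> y \<le> fibre_max X Y f \<phi>' y"
proof -
  obtain x0 where "x0 \<in> topspace X" "f x0 = y" "\<phi> x0 = fibre_max X Y f \<phi> y"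
    using fibre_max_attain(1)[OF assms(1,4)] by blast
  then show ?thesis using fibre_max_attain(2)[OF assms(2,4), of x0] assms(3) by force
qed

lemma fibre_max_shift:
  assumes \<phi>: "\<phi> \<in> CX X"
  shows "fibre_max X Y f (extX X (\<lambda>x. \<phi> x + c)) = extX Y (\<lambda>y. fibre_max X Y f \<phi> y + c)"
proof
  fix y
  show "fibre_max X Y f (extX X (\<lambda>x. \<phi> x + c)) y = extX Y (\<lambda>y. fibre_max X Y f \<phi> y + c) y"
  proof (cases "y \<in> topspace Y")
    case True
    obtain x0 where x0: "x0 \<in> topspace X" "f x0 = y" "\<phi> x0 = fibre_max X Y f \<phi> y"
      using fibre_max_attain(1)[OF CX_cont[OF \<phi>] True] by blast
    show ?thesis using True x0 fibre_max_attain(2)[OF CX_cont[OF \<phi>] True]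
      by (subst fibre_max_eqI[of _ _ x0]) (auto simp: extX_def)
  qed (simp add: fibre_max_def extX_def)
qed

lemma fibre_max_homog:
  assumes \<phi>: "\<phi> \<in> CX X" and t: "t \<ge> 0"
  shows "fibre_max X Y f (\<lambda>x. t * \<phi> x) = (\<lambda>y. t * fibre_max X Y f \<phi> y)"
proof
  fix y
  show "fibre_max X Y f (\<lambda>x. t * \<phi> x) y = t * fibre_max X Y f \<phi> y"
  proof (cases "y \<in> topspace Y")
    case True
    obtain x0 where x0: "x0 \<in> topspace X" "f x0 = y" "\<phi> x0 = fibre_max X Y f \<phi> y"
      using fibre_max_attain(1)[OF CX_cont[OF \<phi>] True] by blast
    show ?thesis using True x0 fibre_max_attain(2)[OF CX_cont[OF \<phi>] True] t
      by (subst fibre_max_eqI[of _ _ x0]) (auto intro: mult_left_mono)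
  qed (simp add: fibre_max_def)
qed

lemma fibre_max_pull:
  assumes \<psi>: "\<psi> \<in> CX Y"
  shows "fibre_max X Y f (extX X (\<lambda>x. \<psi> (f x))) = \<psi>"
proof
  fix y
  show "fibre_max X Y f (extX X (\<lambda>x. \<psi> (f x))) y = \<psi> y"
  proof (cases "y \<in> topspace Y")
    case True
    then have "y \<in> f ` topspace X" using sf by simp
    then obtain x0 where "x0 \<in> topspace X" "f x0 = y" by blast
    then show ?thesis using True
      by (subst fibre_max_eqI[of _ _ x0]) (auto simp: extX_def)
  qed (simp add: fibre_max_def CX_out[OF \<psi>])
qed

lemma fibre_min_mono:
  assumes "\<phi> \<in> CX X" "\<phi>' \<in> CX X" "\<forall>x\<in>topspace X. \<phi> x \<le> \<phi>' x" "y \<in> topspace Y"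
  shows "fibre_min X Y f \<phi> y \<le> fibre_min X Y f \<phi>' y"
  unfolding fibre_min_def
  using fibre_max_mono[OF CX_cont[OF CX_minus[OF assms(2)]] CX_cont[OF CX_minus[OF assms(1)]] _ assms(4)]
    assms(3)
  by auto

lemma fibre_min_shift:
  assumes \<phi>: "\<phi> \<in> CX X"
  shows "fibre_min X Y f (extX X (\<lambda>x. \<phi> x + c)) = extX Y (\<lambda>y. fibre_min X Y f \<phi> y + c)"
proof -
  have "(\<lambda>x. - extX X (\<lambda>x. \<phi> x + c) x) = extX X (\<lambda>x. - \<phi> x + - c)"
    by (auto simp: extX_def)
  then have "fibre_min X Y f (extX X (\<lambda>x. \<phi> x + c))
      = (\<lambda>y. - extX Y (\<lambda>y. fibre_max X Y f (\<lambda>x. - \<phi> x) y + - c) y)"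
    using fibre_max_shift[OF CX_minus[OF \<phi>], of "- c"] by (simp add: fibre_min_def)
  then show ?thesis by (auto simp: extX_def fibre_min_def)
qed

lemma fibre_min_homog:
  assumes \<phi>: "\<phi> \<in> CX X" and t: "t \<ge> 0"
  shows "fibre_min X Y f (\<lambda>x. t * \<phi> x) = (\<lambda>y. t * fibre_min X Y f \<phi> y)"
proof -
  have "(\<lambda>x. - (t * \<phi> x)) = (\<lambda>x. t * (- \<phi> x))" by auto
  then show ?thesis unfolding fibre_min_def using fibre_max_homog[OF CX_minus[OF \<phi>] t] by simp
qed

lemma fibre_min_pull:
  assumes \<psi>: "\<psi> \<in> CX Y"
  shows "fibre_min X Y f (extX X (\<lambda>x. \<psi> (f x))) = \<psi>"
proof -
  have "(\<lambda>x. - extX X (\<lambda>x. \<psi> (f x)) x) = extX X (\<lambda>x. (\<lambda>y. - \<psi> y) (f x))"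
    by (auto simp: extX_def)
  then show ?thesis unfolding fibre_min_def using fibre_max_pull[OF CX_minus[OF \<psi>]] by simp
qed

section \<open>The induced map OH(f)\<close>

lemma pull_CX: "\<psi> \<in> CX Y \<Longrightarrow> extX X (\<lambda>x. \<psi> (f x)) \<in> CX X"
  by (intro CX_extX continuous_map_compose[OF cf, unfolded o_def] CX_cont)

lemma OHmap_OH:
  assumes cY: "compact_space Y" and \<nu>: "\<nu> \<in> OH X"
  shows "OHmap X Y f \<nu> \<in> OH Y"
proof (rule OH_intro[OF cY])
  show "OHmap X Y f \<nu> \<in> extensional (CX Y)" by (simp add: OHmap_def)
  have "extX X (\<lambda>x. extX Y (\<lambda>_. 1) (f x)) = extX X (\<lambda>_. 1)"
    by (rule extX_cong) (simp add: extX_in f_topspace)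
  then show "OHmap X Y f \<nu> (extX Y (\<lambda>_. 1)) = 1"
    using OH_props(1)[OF \<nu>] CX_extX[of Y "\<lambda>_. 1"] by (simp add: OHmap_def)
  fix \<phi> \<psi> :: "'b \<Rightarrow> real" and c t :: real
  assume \<phi>: "\<phi> \<in> CX Y"
  have e1: "extX X (\<lambda>x. extX Y (\<lambda>y. \<phi> y + c) (f x)) = extX X (\<lambda>x. extX X (\<lambda>x. \<phi> (f x)) x + c)"
    by (rule extX_cong) (simp add: extX_in f_topspace)
  show "OHmap X Y f \<nu> (extX Y (\<lambda>x. \<phi> x + c)) = OHmap X Y f \<nu> \<phi> + c"
    using CX_shift[OF \<phi>, of c] \<phi> OH_props(2)[OF \<nu> pull_CX[OF \<phi>]]
    by (simp add: OHmap_def e1)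
  show "OHmap X Y f \<nu> \<phi> \<le> OHmap X Y f \<nu> \<psi>"
    if \<psi>: "\<psi> \<in> CX Y" and le: "\<forall>x\<in>topspace Y. \<phi> x \<le> \<psi> x"
  proof -
    have "\<nu> (extX X (\<lambda>x. \<phi> (f x))) \<le> \<nu> (extX X (\<lambda>x. \<psi> (f x)))"
      using le f_topspace
      by (intro OH_props(3)[OF \<nu> pull_CX[OF \<phi>] pull_CX[OF \<psi>]]) (auto simp: extX_def)
    then show ?thesis using \<phi> \<psi> by (simp add: OHmap_def)
  qed
  show "OHmap X Y f \<nu> (\<lambda>x. t * \<phi> x) = t * OHmap X Y f \<nu> \<phi>" if t: "t \<ge> 0"
  proof -
    have e2: "extX X (\<lambda>x. t * \<phi> (f x)) = (\<lambda>x. t * extX X (\<lambda>x. \<phi> (f x)) x)"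
      by (auto simp: extX_def)
    show ?thesis
      using CX_mult[OF \<phi>, of t] \<phi> OH_props(4)[OF \<nu> pull_CX[OF \<phi>] t]
      by (simp add: OHmap_def e2)
  qed
qed

lemma OHmap_dirac:
  assumes "x \<in> topspace X"
  shows "OHmap X Y f (dirac X x) = dirac Y (f x)"
proof
  fix \<psi>
  show "OHmap X Y f (dirac X x) \<psi> = dirac Y (f x) \<psi>"
    using assms pull_CX[of \<psi>] by (auto simp: OHmap_def dirac_def extX_def)
qed

section \<open>Open f: a continuous section of OH(f) through every point\<close>

text \<open>Each of \<nu>0, \<mu> \<circ> (\<cdot>)^+, \<mu> \<circ> (\<cdot>)^- satisfies the OH axioms, and max/min preserve them.\<close>
lemma OHlift_OH:
  assumes om: "open_map X Y f" and \<mu>: "\<mu> \<in> OH Y" and \<nu>0: "\<nu>0 \<in> OH X"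
  shows "OHlift X Y f \<nu>0 \<mu> \<in> OH X"
proof (rule OH_intro[OF cX])
  let ?M = "fibre_max X Y f" and ?m = "fibre_min X Y f"
  show "OHlift X Y f \<nu>0 \<mu> \<in> extensional (CX X)" by (simp add: OHlift_def)
  have one: "extX X (\<lambda>_. 1) \<in> CX X" "extX Y (\<lambda>_. 1) \<in> CX Y" by (auto intro: CX_extX)
  have "extX X (\<lambda>_. 1) = extX X (\<lambda>x. extX Y (\<lambda>_. 1) (f x))"
    by (rule extX_cong) (simp add: extX_in f_topspace)
  then have "?M (extX X (\<lambda>_. 1)) = extX Y (\<lambda>_. 1)" "?m (extX X (\<lambda>_. 1)) = extX Y (\<lambda>_. 1)"
    using fibre_max_pull[OF one(2)] fibre_min_pull[OF one(2)] by simp_all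
  then show "OHlift X Y f \<nu>0 \<mu> (extX X (\<lambda>_. 1)) = 1"
    using one OH_props(1)[OF \<nu>0] OH_props(1)[OF \<mu>] by (simp add: OHlift_def)
  fix \<phi> \<psi> :: "'a \<Rightarrow> real" and c t :: real
  assume \<phi>: "\<phi> \<in> CX X"
  note M\<phi> = fibre_max_CX[OF om CX_cont[OF \<phi>]] and m\<phi> = fibre_min_CX[OF om \<phi>]
  show "OHlift X Y f \<nu>0 \<mu> (extX X (\<lambda>x. \<phi> x + c)) = OHlift X Y f \<nu>0 \<mu> \<phi> + c"
    using \<phi> CX_shift[OF \<phi>] fibre_max_shift[OF \<phi>] fibre_min_shift[OF \<phi>]
      OH_props(2)[OF \<nu>0 \<phi>] OH_props(2)[OF \<mu> M\<phi>] OH_props(2)[OF \<mu> m\<phi>]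
    by (simp add: OHlift_def max_def min_def)
  show "OHlift X Y f \<nu>0 \<mu> \<phi> \<le> OHlift X Y f \<nu>0 \<mu> \<psi>"
    if \<psi>: "\<psi> \<in> CX X" and le: "\<forall>x\<in>topspace X. \<phi> x \<le> \<psi> x"
  proof -
    have "\<mu> (?M \<phi>) \<le> \<mu> (?M \<psi>)"
      using fibre_max_mono[OF CX_cont[OF \<phi>] CX_cont[OF \<psi>] le]
      by (intro OH_props(3)[OF \<mu> M\<phi> fibre_max_CX[OF om CX_cont[OF \<psi>]]]) auto
    moreover have "\<mu> (?m \<phi>) \<le> \<mu> (?m \<psi>)"
      using fibre_min_mono[OF \<phi> \<psi> le]
      by (intro OH_props(3)[OF \<mu> m\<phi> fibre_min_CX[OF om \<psi>]]) auto
    moreover have "\<nu>0 \<phi> \<le> \<nu>0 \<psi>" using OH_props(3)[OF \<nu>0 \<phi> \<psi> le] .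
    ultimately show ?thesis
      using \<phi> \<psi> by (simp add: OHlift_def max_def min_def)
  qed
  show "OHlift X Y f \<nu>0 \<mu> (\<lambda>x. t * \<phi> x) = t * OHlift X Y f \<nu>0 \<mu> \<phi>" if t: "t \<ge> 0"
  proof -
    have "max (min (t * a) (t * b)) (t * d) = t * max (min a b) d" for a b d :: real
      using t by (simp add: min_mult_distrib_left max_mult_distrib_left)
    then show ?thesis
      using \<phi> CX_mult[OF \<phi>, of t] fibre_max_homog[OF \<phi> t] fibre_min_homog[OF \<phi> t]
        OH_props(4)[OF \<nu>0 \<phi> t] OH_props(4)[OF \<mu> M\<phi> t] OH_props(4)[OF \<mu> m\<phi> t]
      by (simp add: OHlift_def)
  qed
qed

text \<open>The lift is a section: on pull-backs \<psi> \<circ> f both fibrewise extrema equal \<psi>.\<close>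
lemma OHmap_OHlift:
  assumes \<mu>: "\<mu> \<in> OH Y"
  shows "OHmap X Y f (OHlift X Y f \<nu>0 \<mu>) = \<mu>"
proof
  fix \<psi>
  show "OHmap X Y f (OHlift X Y f \<nu>0 \<mu>) \<psi> = \<mu> \<psi>"
  proof (cases "\<psi> \<in> CX Y")
    case True
    then show ?thesis using pull_CX[OF True] fibre_max_pull[OF True] fibre_min_pull[OF True]
      by (simp add: OHmap_def OHlift_def)
  next
    case False
    then show ?thesis using OH_props(5)[OF \<mu>] by (simp add: OHmap_def extensional_def)
  qed
qed

text \<open>The section passes through \<nu>0, since \<nu>0(\<phi>^- \<circ> f) \<le> \<nu>0 \<phi> \<le> \<nu>0(\<phi>^+ \<circ> f).\<close>
lemma OHlift_OHmap:
  assumes om: "open_map X Y f" and \<nu>0: "\<nu>0 \<in> OH X"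
  shows "OHlift X Y f \<nu>0 (OHmap X Y f \<nu>0) = \<nu>0"
proof
  fix \<phi>
  show "OHlift X Y f \<nu>0 (OHmap X Y f \<nu>0) \<phi> = \<nu>0 \<phi>"
  proof (cases "\<phi> \<in> CX X")
    case True
    note M\<phi> = fibre_max_CX[OF om CX_cont[OF True]] and m\<phi> = fibre_min_CX[OF om True]
    have "\<nu>0 \<phi> \<le> \<nu>0 (extX X (\<lambda>x. fibre_max X Y f \<phi> (f x)))"
      using fibre_max_ge[OF CX_cont[OF True]]
      by (intro OH_props(3)[OF \<nu>0 True pull_CX[OF M\<phi>]]) (auto simp: extX_def)
    moreover have "\<nu>0 (extX X (\<lambda>x. fibre_min X Y f \<phi> (f x))) \<le> \<nu>0 \<phi>"
      using fibre_min_le[OF CX_cont[OF True]]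
      by (intro OH_props(3)[OF \<nu>0 pull_CX[OF m\<phi>] True]) (auto simp: extX_def)
    ultimately show ?thesis using True M\<phi> m\<phi>
      by (simp add: OHmap_def OHlift_def)
  next
    case False
    then show ?thesis using OH_props(5)[OF \<nu>0] by (simp add: OHlift_def extensional_def)
  qed
qed

text \<open>Every coordinate of the lift is a max/min of continuous evaluations.\<close>
lemma OHlift_cont:
  assumes om: "open_map X Y f" and \<nu>0: "\<nu>0 \<in> OH X"
  shows "continuous_map (OHtop Y) (OHtop X) (OHlift X Y f \<nu>0)"
proof (rule continuous_map_into_OHtop)
  show "\<And>\<mu>. \<mu> \<in> topspace (OHtop Y) \<Longrightarrow> OHlift X Y f \<nu>0 \<mu> \<in> OH X"
    using OHlift_OH[OF om _ \<nu>0] by simp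
  fix \<phi> assume \<phi>: "\<phi> \<in> CX X"
  have "continuous_map (OHtop Y) euclideanreal
         (\<lambda>\<mu>. max (min (\<nu>0 \<phi>) (\<mu> (fibre_max X Y f \<phi>))) (\<mu> (fibre_min X Y f \<phi>)))"
    using OH_eval_cont[OF fibre_max_CX[OF om CX_cont[OF \<phi>]]] OH_eval_cont[OF fibre_min_CX[OF om \<phi>]]
    by (intro continuous_intros) auto
  then show "continuous_map (OHtop Y) euclideanreal (\<lambda>\<mu>. OHlift X Y f \<nu>0 \<mu> \<phi>)"
    using \<phi> by (simp add: OHlift_def)
qed

theorem OHmap_open_if_open:
  assumes cY: "compact_space Y" and om: "open_map X Y f"
  shows "open_map (OHtop X) (OHtop Y) (OHmap X Y f)"
proof (rule open_map_by_sections)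
  show "OHmap X Y f ` topspace (OHtop X) \<subseteq> topspace (OHtop Y)"
    using OHmap_OH[OF cY] by auto
  fix \<nu>0 assume "\<nu>0 \<in> topspace (OHtop X)"
  then have \<nu>0: "\<nu>0 \<in> OH X" by simp
  show "\<exists>s. continuous_map (OHtop Y) (OHtop X) s \<and> s (OHmap X Y f \<nu>0) = \<nu>0 \<and>
           (\<forall>\<mu>\<in>topspace (OHtop Y). OHmap X Y f (s \<mu>) = \<mu>)"
    using OHlift_cont[OF om \<nu>0] OHlift_OHmap[OF om \<nu>0] OHmap_OHlift by auto
qed

section \<open>Open OH(f): f is open\<close>

text \<open>A functional \<nu> with OH(f)(\<nu>) = \<delta>_y is concentrated near the fibre over y: if the
  fibre misses {\<phi> \<ge> a}, where \<phi> \<le> 1, then \<nu> \<phi> \<le> a.  Indeed \<phi> \<le> \<psi> \<circ> f + a for a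
  Urysohn function \<psi> vanishing at y and equal to 1 on f{\<phi> \<ge> a}.\<close>
lemma OHmap_dirac_bound:
  assumes nY: "normal_space Y" and \<nu>: "\<nu> \<in> OH X" and y: "y \<in> topspace Y"
    and push: "OHmap X Y f \<nu> = dirac Y y"
    and \<phi>: "\<phi> \<in> CX X" "\<And>x. x \<in> topspace X \<Longrightarrow> \<phi> x \<le> 1" and a: "0 \<le> a"
    and away: "y \<notin> f ` {x \<in> topspace X. a \<le> \<phi> x}"
  shows "\<nu> \<phi> \<le> a"
proof -
  let ?K = "{x \<in> topspace X. a \<le> \<phi> x}"
  have "closedin X ?K"
    using CX_cont[OF \<phi>(1)] continuous_map_upper_lower_semicontinuous_le by blast
  then have "compactin Y (f ` ?K)"
    using cX cf closedin_compact_space image_compactin by blast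
  then have cK: "closedin Y (f ` ?K)" using hY compactin_imp_closedin by blast
  have cy: "closedin Y {y}" using hY y by (simp add: Hausdorff_imp_t1_space closedin_t1_singleton)
  have dj: "disjnt {y} (f ` ?K)" using away by (simp add: disjnt_def)
  obtain \<psi> where \<psi>: "\<psi> \<in> CX Y" "\<And>z. z \<in> topspace Y \<Longrightarrow> 0 \<le> \<psi> z \<and> \<psi> z \<le> 1"
      "\<And>z. z \<in> {y} \<Longrightarrow> \<psi> z = 0" "\<And>z. z \<in> f ` ?K \<Longrightarrow> \<psi> z = 1"
    by (rule Urysohn_CX[OF nY cy cK dj]) blast
  define g where "g = extX X (\<lambda>x. \<psi> (f x))"
  have gC: "g \<in> CX X" unfolding g_def by (rule pull_CX[OF \<psi>(1)])
  have "\<nu> g = dirac Y y \<psi>"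
    using push[symmetric] \<psi>(1) by (simp add: OHmap_def g_def)
  then have g0: "\<nu> g = 0" using \<psi>(1,3) by (simp add: dirac_def)
  have "\<nu> \<phi> \<le> \<nu> (extX X (\<lambda>x. g x + a))"
  proof (rule OH_props(3)[OF \<nu> \<phi>(1) CX_shift[OF gC]], intro ballI)
    fix x assume x: "x \<in> topspace X"
    have "g x = \<psi> (f x)" using x by (simp add: g_def extX_in)
    moreover have "a \<le> \<phi> x \<Longrightarrow> \<psi> (f x) = 1" using x \<psi>(4) by blast
    ultimately show "\<phi> x \<le> extX X (\<lambda>x. g x + a) x"
      using x \<psi>(2)[OF f_topspace[OF x]] \<phi>(2)[OF x] a
      by (cases "a \<le> \<phi> x") (auto simp: extX_in)
  qed
  also have "\<dots> = a" using OH_props(2)[OF \<nu> gC] g0 by simp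
  finally show ?thesis .
qed

theorem open_if_OHmap_open:
  assumes cY: "compact_space Y" and nX: "normal_space X" and nY: "normal_space Y"
    and hX: "Hausdorff_space X" and oh: "open_map (OHtop X) (OHtop Y) (OHmap X Y f)"
  shows "open_map X Y f"
  unfolding open_map_def
proof (intro allI impI)
  fix U assume U: "openin X U"
  show "openin Y (f ` U)"
    unfolding openin_subopen[of Y "f ` U"]
  proof
    fix y0 assume "y0 \<in> f ` U"
    then obtain x where x: "x \<in> U" "y0 = f x" by auto
    have xX: "x \<in> topspace X" using x U openin_subset by blast
    have "closedin X (topspace X - U)" by (intro closedin_diff closedin_topspace U)
    moreover have "closedin X {x}"
      using hX xX by (simp add: Hausdorff_imp_t1_space closedin_t1_singleton)
    moreover have "disjnt (topspace X - U) {x}" using x by (simp add: disjnt_def)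
    ultimately obtain \<phi> where \<phi>: "\<phi> \<in> CX X" "\<And>z. z \<in> topspace X \<Longrightarrow> 0 \<le> \<phi> z \<and> \<phi> z \<le> 1"
        "\<And>z. z \<in> topspace X - U \<Longrightarrow> \<phi> z = 0" "\<And>z. z \<in> {x} \<Longrightarrow> \<phi> z = 1"
      by (rule Urysohn_CX[OF nX]) blast
    define W where "W = {\<nu> \<in> topspace (OHtop X). \<nu> \<phi> \<in> {1/2<..}}"
    have "openin (OHtop X) W"
      unfolding W_def by (rule openin_continuous_map_preimage[OF OH_eval_cont[OF \<phi>(1)]]) simp
    then have "openin (OHtop Y) (OHmap X Y f ` W)" using oh unfolding open_map_def by blast
    define G where "G = {y \<in> topspace Y. dirac Y y \<in> OHmap X Y f ` W}"
    have "openin Y G"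
      unfolding G_def by (rule openin_continuous_map_preimage[OF dirac_cont[OF cY]]) fact
    moreover have "y0 \<in> G"
    proof -
      have "dirac X x \<in> W" using dirac_OH[OF cX xX] xX \<phi>(1,4) by (auto simp: W_def dirac_def)
      then show ?thesis unfolding G_def using x OHmap_dirac[OF xX] f_topspace[OF xX] by force
    qed
    moreover have "G \<subseteq> f ` U"
    proof
      fix y assume "y \<in> G"
      then obtain \<nu> where y: "y \<in> topspace Y" and \<nu>: "\<nu> \<in> OH X" "\<nu> \<phi> > 1/2"
          "OHmap X Y f \<nu> = dirac Y y"
        by (auto simp: G_def W_def)
      have "{z \<in> topspace X. 1/4 \<le> \<phi> z} \<subseteq> U" using \<phi>(3) by force
      then show "y \<in> f ` U"
        using OHmap_dirac_bound[OF nY \<nu>(1) y \<nu>(3) \<phi>(1), of "1/4"] \<phi>(2) \<nu>(2) by force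
    qed
    ultimately show "\<exists>T. openin Y T \<and> y0 \<in> T \<and> T \<subseteq> f ` U" by blast
  qed
qed

end

theorem proposition1:
  fixes X :: "'a topology" and Y :: "'b topology" and f :: "'a \<Rightarrow> 'b"
  assumes "compact_space X" and "Hausdorff_space X"
    and "compact_space Y" and "Hausdorff_space Y"
    and "continuous_map X Y f" and "f ` topspace X = topspace Y"
  shows "open_map (OHtop X) (OHtop Y) (OHmap X Y f) \<longleftrightarrow> open_map X Y f"
proof -
  have "normal_space X" "normal_space Y"
    using assms compact_Hausdorff_or_regular_imp_normal_space by blast+
  then show ?thesis
    using OHmap_open_if_open[OF assms(1,4,5,6,3)] open_if_OHmap_open[OF assms(1,4,5,6,3) _ _ assms(2)]
    by blast
qed

end
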